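(* Let $I=[a,b]$ be a compact interval, $P,\tilde P:I\to\mathbb{R}^{n\times m}$ continuous with $\mathrm{rank}(P(s))=n$ for all $s\in I$, and $\Omega=c+G\mathbf{B}_p$ with $c\in\mathbb{R}^m$, $G\in\mathbb{R}^{m\times p}$, $\mathrm{rank}(G)=m$. Put $P_d(s)=\tilde P(s)-P(s)$ and assume $\sup_{s\in I}\|P_d(s)c\|\le\inf_{s\in I}\|P(s)G\|_l$. Then $$\Bigl(\int_I\tilde P(s)\,\mathrm{d}s\Bigr)(c+\alpha G\mathbf{B}_p)\subseteq\int_IP(s)\Omega\,\mathrm{d}s$$ for every $\alpha\in[0,\gamma_m]$, where $$\gamma_m=\frac{\inf_{s\in I}\|P(s)G\|_l-\sup_{s\in I}\|P_d(s)c\|}{\inf_{s\in I}\|P(s)G\|_l+\sup_{s\in I}\|P_d(s)G\|}.$$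
   Context: A norm $\|\cdot\|$ is fixed on each $\mathbb{R}^k$, $\mathbf{B}_k$ is its closed unit ball, and matrices carry induced operator norms. For $M\in\mathbb{R}^{n\times m}\setminus\{0\}$, $\|M\|_l=\max\{\mu\in\mathbb{R}:\ \forall y\in\mathrm{col}(M)\ \exists x \text{ with } Mx=y,\ \mu\|x\|\le\|y\|\}$. Set-valued integral: $\int_IF(s)W\,\mathrm{d}s=\bigcup_w\int_IF(s)w(s)\,\mathrm{d}s$, the union over all Lebesgue measurable $w:I\to W$. *)

theory Defs
  imports "HOL-Analysis.Analysis"
begin

text \<open>An arbitrary norm on a real vector space (the paper fixes an arbitrary norm on each R^k).\<close>
definition is_norm :: "('a::real_vector \<Rightarrow> real) \<Rightarrow> bool" where
  "is_norm N \<longleftrightarrow> (\<forall>x. 0 \<le> N x) \<and> (\<forall>x. N x = 0 \<longleftrightarrow> x = 0)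
     \<and> (\<forall>r x. N (r *\<^sub>R x) = \<bar>r\<bar> * N x) \<and> (\<forall>x y. N (x + y) \<le> N x + N y)"

definition unit_ball :: "('a \<Rightarrow> real) \<Rightarrow> 'a set" where
  "unit_ball N = {x. N x \<le> 1}"

definition op_norm :: "(real^'n \<Rightarrow> real) \<Rightarrow> (real^'m \<Rightarrow> real) \<Rightarrow> real^'n^'m \<Rightarrow> real" where
  "op_norm Nx Ny M = Sup {Ny (M *v x) | x. Nx x \<le> 1}"

definition lower_norm :: "(real^'n \<Rightarrow> real) \<Rightarrow> (real^'m \<Rightarrow> real) \<Rightarrow> real^'n^'m \<Rightarrow> real" where
  "lower_norm Nx Ny M = Sup {\<mu>. \<forall>y \<in> range (\<lambda>x. M *v x). \<exists>x. M *v x = y \<and> \<mu> * Nx x \<le> Ny y}"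

definition set_integral_mat :: "real set \<Rightarrow> (real \<Rightarrow> real^'m^'n) \<Rightarrow> (real^'m) set \<Rightarrow> (real^'n) set" where
  "set_integral_mat I F W =
     {integral I (\<lambda>s. F s *v w s) | w. w \<in> borel_measurable (lebesgue_on I) \<and> (\<forall>s\<in>I. w s \<in> W)}"

end

theory Submission
  imports Defs
begin

text \<open>
  Let L, \<sigma>c, \<sigma>G be the infimum and the two suprema in the statement, fix s, a point u of the
  unit ball, and put y = c + \<alpha> G u. Then \<parallel>(Pt s - P s) y\<parallel> \<le> \<sigma>c + \<alpha> \<sigma>G, so by the definition of the
  lower norm (Pt s - P s) y = P s G v for some v with L \<parallel>v\<parallel> \<le> \<sigma>c + \<alpha> \<sigma>G. The bound on \<alpha> is exactly
  what makes \<parallel>\<alpha> u + v\<parallel> \<le> 1, hence Pt s y = P s (c + G (\<alpha> u + v)) lies in P s \<Omega>.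
  To integrate, these pointwise solutions must be chosen measurably in s. For each k the minimiser
  over \<Omega> of k \<parallel>P s w - Pt s y\<parallel> + \<parallel>w\<parallel>^2 is unique, hence continuous in s, and as k \<rightarrow> \<infinity> these
  minimisers converge to the solution in \<Omega> of least Euclidean norm.
\<close>

lemma is_normD:
  assumes "is_norm N"
  shows is_norm_nonneg: "0 \<le> N x" and is_norm_eq_0: "N x = 0 \<longleftrightarrow> x = 0"
    and is_norm_scaleR: "N (r *\<^sub>R x) = \<bar>r\<bar> * N x" and is_norm_triangle: "N (x + y) \<le> N x + N y"
  using assms unfolding is_norm_def by auto

lemma is_norm_zero: "is_norm N \<Longrightarrow> N 0 = 0"
  using is_norm_eq_0 by blast

lemma is_norm_pos: "is_norm N \<Longrightarrow> x \<noteq> 0 \<Longrightarrow> 0 < N x"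
  using is_norm_nonneg is_norm_eq_0 by (metis order_le_less)

lemma is_norm_diff: "is_norm N \<Longrightarrow> N x - N y \<le> N (x - y)"
  using is_norm_triangle[of N "x - y" y] by simp

lemma is_norm_combination:
  "is_norm N \<Longrightarrow> 0 \<le> r \<Longrightarrow> N (r *\<^sub>R x + y) \<le> r * N x + N y"
  using is_norm_triangle[of N "r *\<^sub>R x" y] is_norm_scaleR[of N r x] by simp

lemma is_norm_sum:
  assumes "is_norm N"
  shows "N (sum f S) \<le> (\<Sum>i\<in>S. N (f i))"
proof (induction S rule: infinite_finite_induct)
  case (insert x F)
  then show ?case using is_norm_triangle[OF assms, of "f x" "sum f F"] by simp
qed (simp_all add: is_norm_zero[OF assms])

lemma is_norm_le_norm:
  fixes N :: "'a::euclidean_space \<Rightarrow> real"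
  assumes "is_norm N"
  shows "N x \<le> (\<Sum>b\<in>Basis. N b) * norm x"
proof -
  have "N x = N (\<Sum>b\<in>Basis. (x \<bullet> b) *\<^sub>R b)" by (simp add: euclidean_representation)
  also have "\<dots> \<le> (\<Sum>b\<in>Basis. N ((x \<bullet> b) *\<^sub>R b))" by (rule is_norm_sum[OF assms])
  also have "\<dots> = (\<Sum>b\<in>Basis. \<bar>x \<bullet> b\<bar> * N b)" by (simp add: is_norm_scaleR[OF assms])
  also have "\<dots> \<le> (\<Sum>b\<in>Basis. norm x * N b)"
    by (intro sum_mono mult_right_mono Basis_le_norm is_norm_nonneg[OF assms]) simp
  finally show ?thesis by (simp add: sum_distrib_left mult.commute)
qed

lemma is_norm_lipschitz:
  fixes N :: "'a::euclidean_space \<Rightarrow> real"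
  assumes "is_norm N"
  shows "(\<Sum>b\<in>Basis. N b)-lipschitz_on S N"
proof (rule lipschitz_onI)
  fix x y
  show "dist (N x) (N y) \<le> (\<Sum>b\<in>Basis. N b) * dist x y"
    using is_norm_diff[OF assms, of x y] is_norm_diff[OF assms, of y x]
      is_norm_le_norm[OF assms, of "x - y"] is_norm_le_norm[OF assms, of "y - x"]
    by (simp add: dist_norm dist_real_def abs_le_iff norm_minus_commute)
qed (intro sum_nonneg is_norm_nonneg[OF assms])

lemma is_norm_continuous_on:
  fixes N :: "'a::euclidean_space \<Rightarrow> real"
  shows "is_norm N \<Longrightarrow> continuous_on S N"
  using is_norm_lipschitz lipschitz_on_continuous_on by blast

lemma is_norm_ge_norm:
  fixes N :: "'a::euclidean_space \<Rightarrow> real"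
  assumes "is_norm N"
  obtains k where "k > 0" "\<And>x. k * norm x \<le> N x"
proof -
  have "sphere (0::'a) 1 \<noteq> {}"
    using nonempty_Basis by (auto simp: ex_in_conv[symmetric] intro!: norm_Basis)
  then obtain x0 where x0: "x0 \<in> sphere 0 1" "\<forall>y\<in>sphere 0 1. N x0 \<le> N y"
    using continuous_attains_inf[OF compact_sphere _ is_norm_continuous_on[OF assms]] by blast
  have "N x0 * norm x \<le> N x" for x
  proof (cases "x = 0")
    case False
    then have "N x0 \<le> N (inverse (norm x) *\<^sub>R x)" using x0 by simp
    also have "\<dots> = N x / norm x" by (simp add: is_norm_scaleR[OF assms] field_simps)
    finally show ?thesis using False by (simp add: field_simps)
  qed (simp add: is_norm_zero[OF assms])
  moreover have "N x0 > 0" using x0 by (intro is_norm_pos[OF assms]) auto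
  ultimately show ?thesis using that by blast
qed

lemma bounded_is_norm_sublevel:
  fixes N :: "'a::euclidean_space \<Rightarrow> real"
  assumes "is_norm N"
  shows "bounded {x. N x \<le> r}"
proof -
  obtain k where k: "k > 0" "\<And>x. k * norm x \<le> N x" using is_norm_ge_norm[OF assms] by blast
  have "{x. N x \<le> r} \<subseteq> cball 0 (r / k)"
    using k by (force simp: field_simps intro: order_trans)
  then show ?thesis using bounded_cball bounded_subset by blast
qed

lemma compact_unit_ball:
  fixes N :: "'a::euclidean_space \<Rightarrow> real"
  assumes "is_norm N"
  shows "compact (unit_ball N)"
  unfolding unit_ball_def compact_eq_bounded_closed
  by (intro conjI bounded_is_norm_sublevel closed_Collect_le assms
      is_norm_continuous_on continuous_on_const)

lemma convex_unit_ball: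
  assumes "is_norm N"
  shows "convex (unit_ball N)"
proof (rule convexI)
  fix x y and u v :: real
  assume "x \<in> unit_ball N" "y \<in> unit_ball N" "0 \<le> u" "0 \<le> v" "u + v = 1"
  then show "u *\<^sub>R x + v *\<^sub>R y \<in> unit_ball N"
    using is_norm_combination[OF assms, of u x "v *\<^sub>R y"] is_norm_scaleR[OF assms, of v y]
    by (auto simp: unit_ball_def intro: order_trans[OF _ convex_bound_le])
qed

lemma is_norm_attains_inf:
  fixes N :: "'a::euclidean_space \<Rightarrow> real"
  assumes "is_norm N" "closed S" "x1 \<in> S"
  obtains x0 where "x0 \<in> S" "\<And>x. x \<in> S \<Longrightarrow> N x0 \<le> N x"
proof -
  let ?K = "S \<inter> {x. N x \<le> N x1}"
  have "compact ?K" unfolding compact_eq_bounded_closed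
    using assms bounded_is_norm_sublevel[OF assms(1)]
    by (auto intro!: bounded_Int closed_Int closed_Collect_le is_norm_continuous_on continuous_intros)
  moreover have "?K \<noteq> {}" using assms(3) by blast
  ultimately obtain x0 where "x0 \<in> ?K" "\<forall>x\<in>?K. N x0 \<le> N x"
    using continuous_attains_inf is_norm_continuous_on[OF assms(1)] by metis
  then show ?thesis using that by force
qed

lemma continuous_on_matrix_vector_mult [continuous_intros]:
  fixes A :: "'a::topological_space \<Rightarrow> real^'m^'n"
  assumes "continuous_on S A" "continuous_on S x"
  shows "continuous_on S (\<lambda>t. A t *v x t)"
  unfolding matrix_vector_mult_def by (intro continuous_intros assms)

lemma continuous_on_matrix_mult [continuous_intros]:
  fixes A :: "'a::topological_space \<Rightarrow> real^'m^'n" and B :: "'a \<Rightarrow> real^'p^'m"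
  assumes "continuous_on S A" "continuous_on S B"
  shows "continuous_on S (\<lambda>t. A t ** B t)"
  unfolding matrix_matrix_mult_def by (intro continuous_intros assms)

lemma bounded_linear_matrix_vector_mult_left: "bounded_linear (\<lambda>A::real^'m^'n. A *v x)"
proof -
  have "linear (\<lambda>A::real^'m^'n. A *v x)"
    by (intro linearI) (simp_all add: matrix_vector_mult_add_rdistrib matrix_vector_mult_def
        vec_eq_iff sum_distrib_left mult.assoc sum.distrib distrib_right)
  then show ?thesis by (simp add: linear_conv_bounded_linear)
qed

lemma surj_matrix_mult:
  fixes A :: "real^'m^'n" and B :: "real^'p^'m"
  assumes "surj ((*v) A)" "surj ((*v) B)"
  shows "surj ((*v) (A ** B))"
proof -
  have "(*v) (A ** B) = (*v) A \<circ> (*v) B" by (auto simp: matrix_vector_mul_assoc)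
  then show ?thesis using assms comp_surj by metis
qed

lemma
  fixes M :: "real^'p^'n"
  assumes Np: "is_norm Np" and Nn: "is_norm Nn" and surj: "surj ((*v) M)"
  shows lower_norm_nonneg: "0 \<le> lower_norm Np Nn M"
    and lower_norm_preimage: "\<exists>x. M *v x = y \<and> lower_norm Np Nn M * Np x \<le> Nn y"
proof -
  define S where "S = {\<mu>. \<forall>y \<in> range ((*v) M). \<exists>x. M *v x = y \<and> \<mu> * Np x \<le> Nn y}"
  have L: "lower_norm Np Nn M = Sup S" unfolding S_def lower_norm_def ..
  have min_preimage: "\<exists>x. M *v x = z \<and> (\<forall>x'. M *v x' = z \<longrightarrow> Np x \<le> Np x')" for z
  proof -
    obtain x1 where "M *v x1 = z" using surj by (metis surjD)
    moreover have "closed {x. M *v x = z}" by (intro closed_Collect_eq continuous_intros)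
    ultimately obtain x0 where "x0 \<in> {x. M *v x = z}" "\<And>x. x \<in> {x. M *v x = z} \<Longrightarrow> Np x0 \<le> Np x"
      using is_norm_attains_inf[OF Np] by blast
    then show ?thesis by auto
  qed
  have bound: "\<mu> * Np x \<le> Nn z"
    if \<mu>: "\<mu> \<in> S" and x: "M *v x = z" "\<forall>x'. M *v x' = z \<longrightarrow> Np x \<le> Np x'" for \<mu> x z
  proof (cases "\<mu> \<le> 0")
    case True
    then show ?thesis
      using mult_nonpos_nonneg is_norm_nonneg[OF Np] is_norm_nonneg[OF Nn] by (smt (verit))
  next
    case False
    obtain x' where "M *v x' = z" "\<mu> * Np x' \<le> Nn z" using \<mu> x(1) unfolding S_def by blast
    moreover have "\<mu> * Np x \<le> \<mu> * Np x'" using False x(2) \<open>M *v x' = z\<close> by simp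
    ultimately show ?thesis by linarith
  qed
  have "0 \<in> S" unfolding S_def using is_norm_nonneg[OF Nn] by auto
  have "bdd_above S"
  proof -
    define y0 :: "real^'n" where "y0 = axis undefined 1"
    obtain x0 where x0: "M *v x0 = y0" "\<forall>x'. M *v x' = y0 \<longrightarrow> Np x0 \<le> Np x'"
      using min_preimage by blast
    have "x0 \<noteq> 0" using x0(1) by (auto simp: y0_def axis_eq_0_iff)
    then have "Np x0 > 0" by (rule is_norm_pos[OF Np])
    then show ?thesis
      using bound[OF _ x0] by (intro bdd_aboveI[of _ "Nn y0 / Np x0"]) (simp add: field_simps)
  qed
  then show "0 \<le> lower_norm Np Nn M" unfolding L using \<open>0 \<in> S\<close> by (simp add: cSup_upper)
  obtain x1 where x1: "M *v x1 = y" "\<forall>x'. M *v x' = y \<longrightarrow> Np x1 \<le> Np x'"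
    using min_preimage by blast
  have "Sup S * Np x1 \<le> Nn y"
  proof (cases "Np x1 = 0")
    case False
    then have "Np x1 > 0" using is_norm_nonneg[OF Np, of x1] by linarith
    moreover have "Sup S \<le> Nn y / Np x1"
      using \<open>0 \<in> S\<close> bound[OF _ x1] \<open>Np x1 > 0\<close> by (intro cSup_least) (auto simp: field_simps)
    ultimately show ?thesis by (simp add: field_simps)
  qed (simp add: is_norm_nonneg[OF Nn])
  then show "\<exists>x. M *v x = y \<and> lower_norm Np Nn M * Np x \<le> Nn y" unfolding L using x1 by blast
qed

lemma op_norm_upper:
  fixes D :: "real^'p^'n"
  assumes Np: "is_norm Np" and Nn: "is_norm Nn" and "Np u \<le> 1"
  shows "Nn (D *v u) \<le> op_norm Np Nn D"
proof -
  have "compact ((\<lambda>x. Nn (D *v x)) ` unit_ball Np)"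
    by (intro compact_continuous_image compact_unit_ball[OF Np]
        continuous_on_compose2[OF is_norm_continuous_on[OF Nn], of _ "(*v) D"] continuous_intros) auto
  moreover have "{Nn (D *v x) | x. Np x \<le> 1} = (\<lambda>x. Nn (D *v x)) ` unit_ball Np"
    unfolding unit_ball_def by auto
  ultimately have "bdd_above {Nn (D *v x) | x. Np x \<le> 1}"
    by (metis bounded_imp_bdd_above compact_imp_bounded)
  then show ?thesis unfolding op_norm_def using assms(3) by (intro cSup_upper) auto
qed

lemma op_norm_nonneg:
  fixes D :: "real^'p^'n"
  shows "is_norm Np \<Longrightarrow> is_norm Nn \<Longrightarrow> 0 \<le> op_norm Np Nn D"
  using op_norm_upper[of Np Nn 0 D] by (simp add: is_norm_zero)

lemma op_norm_least:
  fixes D :: "real^'p^'n"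
  assumes "is_norm Np" "\<And>x. Np x \<le> 1 \<Longrightarrow> Nn (D *v x) \<le> B"
  shows "op_norm Np Nn D \<le> B"
proof -
  have "Np 0 \<le> 1" by (simp add: is_norm_zero[OF assms(1)])
  then show ?thesis unfolding op_norm_def using assms(2) by (intro cSup_least) auto
qed

lemma bdd_above_op_norm_image:
  fixes D :: "'a::topological_space \<Rightarrow> real^'p^'n"
  assumes Np: "is_norm Np" and Nn: "is_norm Nn" and "compact S" "continuous_on S D"
  shows "bdd_above ((\<lambda>s. op_norm Np Nn (D s)) ` S)"
proof -
  have "continuous_on (S \<times> unit_ball Np) (\<lambda>z. D (fst z))"
    by (rule continuous_on_compose2[OF assms(4)]) (auto intro: continuous_intros)
  then have "continuous_on (S \<times> unit_ball Np) (\<lambda>z. D (fst z) *v snd z)"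
    by (intro continuous_on_matrix_vector_mult continuous_on_snd continuous_on_id)
  then have "continuous_on (S \<times> unit_ball Np) (\<lambda>z. Nn (D (fst z) *v snd z))"
    by (rule continuous_on_compose2[OF is_norm_continuous_on[OF Nn]]) auto
  then have "compact ((\<lambda>z. Nn (D (fst z) *v snd z)) ` (S \<times> unit_ball Np))"
    using assms(3) compact_unit_ball[OF Np] by (intro compact_continuous_image compact_Times)
  then obtain B where B: "\<And>z. z \<in> S \<times> unit_ball Np \<Longrightarrow> Nn (D (fst z) *v snd z) \<le> B"
    by (meson bounded_imp_bdd_above compact_imp_bounded bdd_above_def image_eqI)
  have "op_norm Np Nn (D s) \<le> B" if "s \<in> S" for s
    using B[of "(s, _)"] that by (intro op_norm_least[OF Np]) (simp add: unit_ball_def)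
  then show ?thesis by (intro bdd_aboveI) auto
qed

lemma perturbed_point_in_image:
  fixes P Pt :: "real^'m^'n" and G :: "real^'p^'m"
  assumes Np: "is_norm Np" and Nn: "is_norm Nn" and surj: "surj ((*v) (P ** G))"
    and L: "L \<le> lower_norm Np Nn (P ** G)"
    and \<sigma>c: "Nn ((Pt - P) *v c) \<le> \<sigma>c" and \<sigma>G: "op_norm Np Nn ((Pt - P) ** G) \<le> \<sigma>G"
    and "\<sigma>c \<le> L" and "0 \<le> \<alpha>" and \<alpha>: "\<alpha> \<le> (L - \<sigma>c) / (L + \<sigma>G)" and u: "Np u \<le> 1"
  shows "\<exists>u'. Np u' \<le> 1 \<and> P *v (c + G *v u') = Pt *v (c + \<alpha> *\<^sub>R (G *v u))"
proof -
  define Pd where "Pd = Pt - P"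
  define y where "y = c + \<alpha> *\<^sub>R (G *v u)"
  have "0 \<le> \<sigma>c" using \<sigma>c is_norm_nonneg[OF Nn] by (rule order_trans[rotated])
  have "0 \<le> \<sigma>G" using \<sigma>G op_norm_nonneg[OF Np Nn] by (rule order_trans[rotated])
  have Pt: "Pt = P + Pd" unfolding Pd_def by simp
  show ?thesis
  proof (cases "L = 0")
    case True
    \<comment> \<open>The bound on \<open>\<alpha>\<close> degenerates to \<open>\<alpha> \<le> 0 / \<sigma>G = 0\<close>.\<close>
    then have "\<sigma>c = 0" "\<alpha> = 0" using \<open>0 \<le> \<sigma>c\<close> \<open>\<sigma>c \<le> L\<close> \<open>0 \<le> \<alpha>\<close> \<alpha> by auto
    then have "Pd *v c = 0" using \<sigma>c is_normD(1,2)[OF Nn] unfolding Pd_def by (meson order_antisym)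
    then have "P *v (c + G *v 0) = Pt *v y"
      unfolding Pt y_def \<open>\<alpha> = 0\<close> by (simp add: matrix_vector_mult_add_rdistrib)
    then show ?thesis using is_norm_zero[OF Np] unfolding y_def by (intro exI[of _ 0]) simp
  next
    case False
    then have "L > 0" using \<open>0 \<le> \<sigma>c\<close> \<open>\<sigma>c \<le> L\<close> by simp
    obtain v where v: "(P ** G) *v v = Pd *v y" "lower_norm Np Nn (P ** G) * Np v \<le> Nn (Pd *v y)"
      using lower_norm_preimage[OF Np Nn surj] by blast
    have "Pd *v y = \<alpha> *\<^sub>R ((Pd ** G) *v u) + Pd *v c"
      unfolding y_def
      by (simp add: matrix_vector_right_distrib matrix_vector_mult_scaleR flip: matrix_vector_mul_assoc)
    then have "Nn (Pd *v y) \<le> \<alpha> * Nn ((Pd ** G) *v u) + Nn (Pd *v c)"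
      using is_norm_combination[OF Nn \<open>0 \<le> \<alpha>\<close>] by simp
    also have "\<dots> \<le> \<alpha> * \<sigma>G + \<sigma>c"
      using op_norm_upper[OF Np Nn u, of "Pd ** G"] \<sigma>G \<sigma>c \<open>0 \<le> \<alpha>\<close> unfolding Pd_def
      by (intro add_mono mult_left_mono) auto
    finally have "L * Np v \<le> \<alpha> * \<sigma>G + \<sigma>c"
      using v(2) mult_right_mono[OF L is_norm_nonneg[OF Np, of v]] by linarith
    moreover have "\<alpha> * (L + \<sigma>G) \<le> L - \<sigma>c"
      using \<alpha> \<open>L > 0\<close> \<open>0 \<le> \<sigma>G\<close> by (simp add: le_divide_eq)
    moreover have "Np (\<alpha> *\<^sub>R u + v) \<le> \<alpha> + Np v"
      using is_norm_combination[OF Np \<open>0 \<le> \<alpha>\<close>, of u v] mult_left_le[OF u \<open>0 \<le> \<alpha>\<close>] by linarith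
    then have "L * Np (\<alpha> *\<^sub>R u + v) \<le> L * \<alpha> + L * Np v"
      using \<open>L > 0\<close> by (simp add: distrib_left[symmetric])
    ultimately have "L * Np (\<alpha> *\<^sub>R u + v) \<le> L * 1" by (simp add: algebra_simps)
    then have "Np (\<alpha> *\<^sub>R u + v) \<le> 1" using \<open>L > 0\<close> by simp
    moreover have "P *v (c + G *v (\<alpha> *\<^sub>R u + v)) = P *v y + (P ** G) *v v"
      unfolding y_def
      by (simp add: matrix_vector_right_distrib matrix_vector_mult_scaleR matrix_vector_mul_assoc add.assoc)
    then have "P *v (c + G *v (\<alpha> *\<^sub>R u + v)) = Pt *v y"
      unfolding v(1) Pt by (simp add: matrix_vector_mult_add_rdistrib)
    ultimately show ?thesis unfolding y_def by blast
  qed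
qed

lemma midpoint_in_convex: "convex K \<Longrightarrow> x \<in> K \<Longrightarrow> y \<in> K \<Longrightarrow> midpoint x y \<in> K"
  using closed_segment_subset midpoint_in_closed_segment by blast

lemma norm_midpoint_squared:
  fixes x y :: "'a::real_inner"
  shows "4 * (norm (midpoint x y))\<^sup>2 = 2 * (norm x)\<^sup>2 + 2 * (norm y)\<^sup>2 - (norm (x - y))\<^sup>2"
  by (simp add: midpoint_def power2_norm_eq_inner inner_add_left inner_add_right inner_diff_left
      inner_diff_right inner_commute algebra_simps)

lemma strongly_midconvex_argmin_unique:
  fixes f :: "'a::real_normed_vector \<Rightarrow> real"
  assumes "convex K"
    and mid: "\<And>x y. x \<in> K \<Longrightarrow> y \<in> K \<Longrightarrow>
                4 * f (midpoint x y) \<le> 2 * f x + 2 * f y - (norm (x - y))\<^sup>2"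
    and x: "x \<in> K" "\<forall>z\<in>K. f x \<le> f z" and y: "y \<in> K" "\<forall>z\<in>K. f y \<le> f z"
  shows "x = y"
proof -
  have "f x \<le> f (midpoint x y)" using x midpoint_in_convex[OF \<open>convex K\<close> x(1) y(1)] by blast
  moreover have "f x = f y" using x y by (simp add: order_antisym)
  ultimately have "(norm (x - y))\<^sup>2 \<le> 0" using mid[OF x(1) y(1)] by linarith
  then show ?thesis by simp
qed

lemma compact_convex_argmin_unique:
  fixes f :: "'a::real_normed_vector \<Rightarrow> real"
  assumes "compact K" "convex K" "K \<noteq> {}" "continuous_on K f"
    and "\<And>x y. x \<in> K \<Longrightarrow> y \<in> K \<Longrightarrow>
               4 * f (midpoint x y) \<le> 2 * f x + 2 * f y - (norm (x - y))\<^sup>2"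
  shows "\<exists>!x. x \<in> K \<and> (\<forall>z\<in>K. f x \<le> f z)"
  using continuous_attains_inf[OF assms(1,3,4)] strongly_midconvex_argmin_unique[OF assms(2,5)]
  by blast

lemma continuous_on_argmin:
  fixes g :: "'a::euclidean_space \<times> 'b::euclidean_space \<Rightarrow> real"
  assumes "closed I" "compact K" "continuous_on (I \<times> UNIV) g"
    and "\<And>s. s \<in> I \<Longrightarrow> v s \<in> K"
    and argmin: "\<And>s w. s \<in> I \<Longrightarrow> w \<in> K \<Longrightarrow> (\<forall>w'\<in>K. g (s, w) \<le> g (s, w')) \<longleftrightarrow> w = v s"
  shows "continuous_on I v"
proof (rule continuous_from_closed_graph[OF \<open>compact K\<close>])
  show "v \<in> I \<rightarrow> K" using assms(4) by blast
  define C where "C w' = (I \<times> UNIV) \<inter> (\<lambda>z. g z - g (fst z, w')) -` {..0}" for w'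
  have "closed (C w')" for w'
  proof -
    have "continuous_on (I \<times> UNIV) (\<lambda>z. g (fst z, w'))"
      by (rule continuous_on_compose2[OF assms(3)]) (auto intro!: continuous_intros)
    then show ?thesis unfolding C_def
      by (intro continuous_closed_preimage closed_Times assms(1) continuous_intros assms(3)) auto
  qed
  moreover have "(\<lambda>s. (s, v s)) ` I = (I \<times> K) \<inter> \<Inter> (C ` K)"
  proof
    have "\<forall>w'\<in>K. g (s, v s) \<le> g (s, w')" if "s \<in> I" for s
      using argmin[OF that assms(4)[OF that]] by simp
    then show "(\<lambda>s. (s, v s)) ` I \<subseteq> (I \<times> K) \<inter> \<Inter> (C ` K)"
      using assms(4) by (auto simp: C_def)
    show "(I \<times> K) \<inter> \<Inter> (C ` K) \<subseteq> (\<lambda>s. (s, v s)) ` I"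
    proof clarify
      fix s w assume "s \<in> I" "w \<in> K" "(s, w) \<in> \<Inter> (C ` K)"
      have "g (s, w) \<le> g (s, w')" if "w' \<in> K" for w'
      proof -
        have "(s, w) \<in> C w'" using \<open>(s, w) \<in> \<Inter> (C ` K)\<close> that by blast
        then show ?thesis unfolding C_def by simp
      qed
      then have "\<forall>w'\<in>K. g (s, w) \<le> g (s, w')" by blast
      then have "w = v s" using argmin \<open>s \<in> I\<close> \<open>w \<in> K\<close> by blast
      then show "(s, w) \<in> (\<lambda>s. (s, v s)) ` I" using \<open>s \<in> I\<close> by blast
    qed
  qed
  ultimately show "closed ((\<lambda>s. (s, v s)) ` I)"
    using closed_Times[OF assms(1) compact_imp_closed[OF assms(2)]] by (auto intro: closed_Int closed_INT)
qed

lemma compact_positive_lower_bound: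
  fixes f :: "'a::topological_space \<Rightarrow> real"
  assumes "compact S" "continuous_on S f" "\<And>x. x \<in> S \<Longrightarrow> 0 < f x"
  obtains \<phi> where "0 < \<phi>" "\<And>x. x \<in> S \<Longrightarrow> \<phi> \<le> f x"
proof (cases "S = {}")
  case False
  then obtain x0 where "x0 \<in> S" "\<forall>x\<in>S. f x0 \<le> f x"
    using continuous_attains_inf[OF assms(1) _ assms(2)] by blast
  then show ?thesis using that assms(3) by blast
qed (use that[of 1] in auto)

lemma penalty_argmin_tendsto:
  fixes A :: "'a::real_normed_vector \<Rightarrow> 'b::real_normed_vector"
  assumes K: "compact K" and A: "continuous_on K A"
    and v: "\<And>k. v k \<in> K"
      "\<And>k w. w \<in> K \<Longrightarrow> real k * norm (A (v k) - b) + (norm (v k))\<^sup>2 \<le> real k * norm (A w - b) + (norm w)\<^sup>2"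
    and ws: "ws \<in> K" "A ws = b"
    and ws_unique: "\<And>w. w \<in> K \<Longrightarrow> A w = b \<Longrightarrow> norm w \<le> norm ws \<Longrightarrow> w = ws"
  shows "v \<longlonglongrightarrow> ws"
proof (rule LIMSEQ_I)
  fix e :: real assume "e > 0"
  define R where "R = norm ws"
  have bound: "real k * norm (A (v k) - b) + (norm (v k))\<^sup>2 \<le> R\<^sup>2" for k
    using v(2)[OF ws(1), of k] ws(2) unfolding R_def by simp
  have residual: "real k * norm (A (v k) - b) \<le> R\<^sup>2" and "(norm (v k))\<^sup>2 \<le> R\<^sup>2" for k
  proof -
    have "0 \<le> real k * norm (A (v k) - b)" by simp
    then show "real k * norm (A (v k) - b) \<le> R\<^sup>2" "(norm (v k))\<^sup>2 \<le> R\<^sup>2"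
      using bound[of k] zero_le_power2[of "norm (v k)"] by linarith+
  qed
  then have "norm (v k) \<le> R" for k unfolding R_def using power2_le_imp_le norm_ge_zero by blast
  define Ke where "Ke = K \<inter> cball 0 R \<inter> {w. e \<le> dist w ws}"
  have far: "v k \<in> Ke" if "\<not> norm (v k - ws) < e" for k
    using that v(1) \<open>norm (v k) \<le> R\<close> by (auto simp: Ke_def dist_norm)
  have "compact Ke" unfolding Ke_def
    by (intro compact_Int_closed K closed_cball closed_Collect_le continuous_intros)
  moreover have "continuous_on Ke A" by (rule continuous_on_subset[OF A]) (auto simp: Ke_def)
  then have "continuous_on Ke (\<lambda>w. norm (A w - b))" by (intro continuous_intros)
  moreover have "0 < norm (A w - b)" if "w \<in> Ke" for w
  proof -
    have "w \<in> K" "norm w \<le> norm ws" "w \<noteq> ws" using that \<open>e > 0\<close> unfolding Ke_def R_def by auto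
    then show ?thesis using ws_unique by auto
  qed
  ultimately obtain \<phi> where "\<phi> > 0" and \<phi>: "\<And>w. w \<in> Ke \<Longrightarrow> \<phi> \<le> norm (A w - b)"
    by (rule compact_positive_lower_bound) blast+
  obtain N :: nat where N: "R\<^sup>2 / \<phi> < real N" using reals_Archimedean2 by blast
  have "norm (v n - ws) < e" if "n \<ge> N" for n
  proof (rule ccontr)
    assume "\<not> norm (v n - ws) < e"
    then have "real n * \<phi> \<le> real n * norm (A (v n) - b)" using \<phi>[OF far] by (simp add: mult_left_mono)
    also have "\<dots> \<le> R\<^sup>2" by (rule residual)
    finally have "real n \<le> R\<^sup>2 / \<phi>" using \<open>\<phi> > 0\<close> by (simp add: field_simps)
    then show False using N that by linarith
  qed
  then show "\<exists>N. \<forall>n\<ge>N. norm (v n - ws) < e" by blast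
qed

lemma penalty_strongly_midconvex:
  fixes A :: "real^'m^'n"
  assumes "0 \<le> \<mu>"
  shows "4 * (\<mu> * norm (A *v midpoint w1 w2 - b) + (norm (midpoint w1 w2))\<^sup>2)
    \<le> 2 * (\<mu> * norm (A *v w1 - b) + (norm w1)\<^sup>2) + 2 * (\<mu> * norm (A *v w2 - b) + (norm w2)\<^sup>2)
      - (norm (w1 - w2))\<^sup>2"
proof -
  have "A *v midpoint w1 w2 + A *v midpoint w1 w2 = A *v w1 + A *v w2"
    by (simp flip: matrix_vector_right_distrib)
  then have residual_mid: "midpoint (A *v w1 - b) (A *v w2 - b) = A *v midpoint w1 w2 - b"
    unfolding midpoint_eq_iff by (simp only: add_diff_add[symmetric])
  have "2 * norm (A *v midpoint w1 w2 - b) \<le> norm (A *v w1 - b) + norm (A *v w2 - b)"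
    using norm_triangle_ineq[of "A *v w1 - b" "A *v w2 - b"]
    unfolding residual_mid[symmetric] by (simp add: midpoint_def)
  from mult_left_mono[OF this, of "2 * \<mu>"] show ?thesis
    using assms norm_midpoint_squared[of w1 w2] by (simp add: algebra_simps)
qed

lemma continuous_penalty_argmin:
  fixes F :: "'a::euclidean_space \<Rightarrow> real^'m^'n" and y :: "'a \<Rightarrow> real^'n" and K :: "(real^'m) set"
  assumes I: "closed I" and F: "continuous_on I F" and y: "continuous_on I y"
    and K: "compact K" "convex K" "K \<noteq> {}" and "0 \<le> \<mu>"
  obtains v where "\<And>s. s \<in> I \<Longrightarrow> v s \<in> K"
    and "\<And>s w. s \<in> I \<Longrightarrow> w \<in> K \<Longrightarrow>
           \<mu> * norm (F s *v v s - y s) + (norm (v s))\<^sup>2 \<le> \<mu> * norm (F s *v w - y s) + (norm w)\<^sup>2"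
    and "continuous_on I v"
proof -
  define f where "f s w = \<mu> * norm (F s *v w - y s) + (norm w)\<^sup>2" for s w
  have f_cont: "continuous_on (I \<times> UNIV) (\<lambda>(s, w). f s w)"
  proof -
    have "continuous_on (I \<times> UNIV) (\<lambda>z. F (fst z))" "continuous_on (I \<times> UNIV) (\<lambda>z. y (fst z))"
      by (auto intro!: continuous_on_compose2[OF F] continuous_on_compose2[OF y] continuous_intros)
    then show ?thesis unfolding f_def case_prod_beta' by (intro continuous_intros)
  qed
  have ex1: "\<exists>!w. w \<in> K \<and> (\<forall>z\<in>K. f s w \<le> f s z)" for s
    unfolding f_def using penalty_strongly_midconvex[OF \<open>0 \<le> \<mu>\<close>]
    by (intro compact_convex_argmin_unique K) (auto intro!: continuous_intros)
  define v where "v s = (THE w. w \<in> K \<and> (\<forall>z\<in>K. f s w \<le> f s z))" for s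
  have v: "v s \<in> K" "\<forall>z\<in>K. f s (v s) \<le> f s z" for s
    using theI'[OF ex1] unfolding v_def by blast+
  have "continuous_on I v"
  proof (rule continuous_on_argmin[OF I K(1) f_cont])
    show "(\<forall>z\<in>K. (\<lambda>(s, w). f s w) (s, w) \<le> (\<lambda>(s, w). f s w) (s, z)) \<longleftrightarrow> w = v s"
      if "w \<in> K" for s w
      using ex1[of s] v[of s] that by auto
  qed (use v in blast)
  then show ?thesis using that v unfolding f_def by blast
qed

lemma minimal_norm_solution:
  fixes A :: "real^'m^'n" and K :: "(real^'m) set"
  assumes K: "compact K" "convex K" and "w0 \<in> K" "A *v w0 = b"
  obtains ws where "ws \<in> K" "A *v ws = b"
    and "\<And>w. w \<in> K \<Longrightarrow> A *v w = b \<Longrightarrow> norm w \<le> norm ws \<Longrightarrow> w = ws"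
proof -
  define W where "W = K \<inter> (*v) A -` {b}"
  have "compact W"
    unfolding W_def
    by (intro compact_Int_closed K continuous_closed_vimage closed_singleton
        matrix_vector_mult_linear_continuous_at)
  moreover have "convex W"
    unfolding W_def by (intro convex_Int K convex_linear_vimage convex_singleton) simp
  moreover have "W \<noteq> {}" using assms(3,4) unfolding W_def by auto
  ultimately have "\<exists>!w. w \<in> W \<and> (\<forall>z\<in>W. (norm w)\<^sup>2 \<le> (norm z)\<^sup>2)"
    by (intro compact_convex_argmin_unique) (auto intro!: continuous_intros simp: norm_midpoint_squared)
  then obtain ws where ws: "ws \<in> W" "\<forall>z\<in>W. (norm ws)\<^sup>2 \<le> (norm z)\<^sup>2"
    and unique: "\<And>w. w \<in> W \<Longrightarrow> \<forall>z\<in>W. (norm w)\<^sup>2 \<le> (norm z)\<^sup>2 \<Longrightarrow> w = ws"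
    by blast
  have "w = ws" if "w \<in> K" "A *v w = b" "norm w \<le> norm ws" for w
  proof (rule unique)
    show "w \<in> W" using that(1,2) by (simp add: W_def)
    have "(norm w)\<^sup>2 \<le> (norm ws)\<^sup>2" using that(3) by (intro power_mono) auto
    then show "\<forall>z\<in>W. (norm w)\<^sup>2 \<le> (norm z)\<^sup>2" using ws(2) by force
  qed
  then show ?thesis using that ws(1) unfolding W_def by blast
qed

lemma measurable_selection_solution:
  fixes F :: "'a::euclidean_space \<Rightarrow> real^'m^'n" and y :: "'a \<Rightarrow> real^'n" and K :: "(real^'m) set"
  assumes I: "closed I" and F: "continuous_on I F" and y: "continuous_on I y"
    and K: "compact K" "convex K" and solvable: "\<And>s. s \<in> I \<Longrightarrow> \<exists>w\<in>K. F s *v w = y s"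
  shows "\<exists>w \<in> borel_measurable (lebesgue_on I). \<forall>s\<in>I. w s \<in> K \<and> F s *v w s = y s"
proof (cases "I = {}")
  case False
  then have "K \<noteq> {}" using solvable by blast
  have "\<exists>v. (\<forall>s\<in>I. v s \<in> K \<and> (\<forall>w\<in>K. real k * norm (F s *v v s - y s) + (norm (v s))\<^sup>2
                                      \<le> real k * norm (F s *v w - y s) + (norm w)\<^sup>2))
          \<and> continuous_on I v" for k
    using continuous_penalty_argmin[OF I F y K \<open>K \<noteq> {}\<close>, of "real k"] by (metis of_nat_0_le_iff)
  then obtain v where v: "\<And>k s. s \<in> I \<Longrightarrow> v k s \<in> K"
    "\<And>k s w. s \<in> I \<Longrightarrow> w \<in> K \<Longrightarrow> real k * norm (F s *v v k s - y s) + (norm (v k s))\<^sup>2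
                                      \<le> real k * norm (F s *v w - y s) + (norm w)\<^sup>2"
    and v_cont: "\<And>k. continuous_on I (v k)"
    by metis
  have "\<exists>ws. ws \<in> K \<and> F s *v ws = y s \<and>
          (\<forall>w. w \<in> K \<longrightarrow> F s *v w = y s \<longrightarrow> norm w \<le> norm ws \<longrightarrow> w = ws)" if "s \<in> I" for s
    using solvable[OF that] minimal_norm_solution[OF K] by metis
  then obtain ws where ws: "\<And>s. s \<in> I \<Longrightarrow> ws s \<in> K" "\<And>s. s \<in> I \<Longrightarrow> F s *v ws s = y s"
    and ws_unique: "\<And>s w. s \<in> I \<Longrightarrow> w \<in> K \<Longrightarrow> F s *v w = y s \<Longrightarrow> norm w \<le> norm (ws s) \<Longrightarrow> w = ws s"
    by metis
  have v_lim: "(\<lambda>k. v k s) \<longlonglongrightarrow> ws s" if "s \<in> I" for s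
    using that by (intro penalty_argmin_tendsto[OF K(1), of "(*v) (F s)" _ "y s"])
      (simp_all add: v ws ws_unique matrix_vector_mult_linear_continuous_on)
  have "ws \<in> borel_measurable (lebesgue_on I)"
  proof (rule borel_measurable_LIMSEQ_metric[of v])
    show "v k \<in> borel_measurable (lebesgue_on I)" for k
      using I by (intro continuous_imp_measurable_on_sets_lebesgue v_cont) (simp add: borel_closed)
  qed (simp add: v_lim)
  then show ?thesis using ws by blast
qed (auto intro: borel_measurable_const)

lemma
  fixes G :: "real^'p^'m"
  assumes "is_norm Np"
  shows compact_affine_image_unit_ball: "compact {c + G *v u | u. u \<in> unit_ball Np}"
    and convex_affine_image_unit_ball: "convex {c + G *v u | u. u \<in> unit_ball Np}"
proof -
  have eq: "{c + G *v u | u. u \<in> unit_ball Np} = (+) c ` ((*v) G ` unit_ball Np)" by auto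
  show "compact {c + G *v u | u. u \<in> unit_ball Np}" unfolding eq
    by (intro compact_continuous_image compact_unit_ball[OF assms] continuous_intros)
  show "convex {c + G *v u | u. u \<in> unit_ball Np}" unfolding eq
    by (intro convex_translation convex_linear_image convex_unit_ball[OF assms]) simp
qed

lemma integral_apply_in_set_integral_mat:
  fixes P Pt :: "real \<Rightarrow> real^'m^'n"
  assumes "continuous_on {a..b} P" "continuous_on {a..b} Pt" "compact K" "convex K"
    and "\<And>s. s \<in> {a..b} \<Longrightarrow> \<exists>w\<in>K. P s *v w = Pt s *v x"
  shows "integral {a..b} Pt *v x \<in> set_integral_mat {a..b} P K"
proof -
  obtain w where w: "w \<in> borel_measurable (lebesgue_on {a..b})"
    "\<And>s. s \<in> {a..b} \<Longrightarrow> w s \<in> K \<and> P s *v w s = Pt s *v x"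
    using measurable_selection_solution[OF closed_atLeastAtMost assms(1) _ assms(3-5)]
      continuous_on_matrix_vector_mult[OF assms(2) continuous_on_const] by blast
  have "integral {a..b} (\<lambda>s. P s *v w s) = integral {a..b} (\<lambda>s. Pt s *v x)"
    using w(2) by (intro integral_cong) auto
  also have "\<dots> = integral {a..b} Pt *v x"
    using integral_linear[OF integrable_continuous_interval[OF assms(2)]
        bounded_linear_matrix_vector_mult_left] by (simp add: o_def)
  finally have "integral {a..b} Pt *v x = integral {a..b} (\<lambda>s. P s *v w s)" ..
  then show ?thesis unfolding set_integral_mat_def using w by blast
qed

theorem lemma8:
  fixes a b :: real
    and P Pt :: "real \<Rightarrow> real^'m^'n"
    and c :: "real^'m" and G :: "real^'p^'m"
    and Nn :: "real^'n \<Rightarrow> real" and Nm :: "real^'m \<Rightarrow> real" and Np :: "real^'p \<Rightarrow> real"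
    and \<alpha> :: real
  assumes "is_norm Nn" "is_norm Nm" "is_norm Np"
    and "a \<le> b"
    and "continuous_on {a..b} P" "continuous_on {a..b} Pt"
    and "\<forall>s\<in>{a..b}. rank (P s) = CARD('n)"
    and "rank G = CARD('m)"
    and "(SUP s\<in>{a..b}. Nn ((Pt s - P s) *v c)) \<le> (INF s\<in>{a..b}. lower_norm Np Nn (P s ** G))"
    and "0 \<le> \<alpha>"
    and "\<alpha> \<le> ((INF s\<in>{a..b}. lower_norm Np Nn (P s ** G)) - (SUP s\<in>{a..b}. Nn ((Pt s - P s) *v c)))
              / ((INF s\<in>{a..b}. lower_norm Np Nn (P s ** G)) + (SUP s\<in>{a..b}. op_norm Np Nn ((Pt s - P s) ** G)))"
  shows "(\<lambda>x. integral {a..b} Pt *v x) ` {c + \<alpha> *\<^sub>R (G *v u) | u. u \<in> unit_ball Np}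
           \<subseteq> set_integral_mat {a..b} P {c + G *v u | u. u \<in> unit_ball Np}"
proof clarify
  \<comment> \<open>The norm \<open>Nm\<close> on the middle space never enters: all estimates are in \<open>Np\<close> and \<open>Nn\<close>.\<close>
  note Nn = assms(1) and Np = assms(3)
  have surj: "surj ((*v) (P s ** G))" if "s \<in> {a..b}" for s
    using assms(7,8) that by (intro surj_matrix_mult) (simp_all flip: full_rank_surjective)
  have inf_le: "(INF t\<in>{a..b}. lower_norm Np Nn (P t ** G)) \<le> lower_norm Np Nn (P s ** G)"
    if "s \<in> {a..b}" for s
    using that lower_norm_nonneg[OF Np Nn surj] by (intro cINF_lower bdd_belowI[of _ 0]) auto
  have sup_c: "Nn ((Pt s - P s) *v c) \<le> (SUP t\<in>{a..b}. Nn ((Pt t - P t) *v c))" if "s \<in> {a..b}" for s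
    using that assms(5,6)
    by (intro cSUP_upper bounded_imp_bdd_above compact_imp_bounded compact_continuous_image
        continuous_on_compose2[OF is_norm_continuous_on[OF Nn], of _ "\<lambda>s. (Pt s - P s) *v c"]
        continuous_intros) auto
  have sup_G: "op_norm Np Nn ((Pt s - P s) ** G) \<le> (SUP t\<in>{a..b}. op_norm Np Nn ((Pt t - P t) ** G))"
    if "s \<in> {a..b}" for s
    using that assms(5,6) by (intro cSUP_upper bdd_above_op_norm_image[OF Np Nn] continuous_intros) auto
  have pointwise: "\<exists>u'. Np u' \<le> 1 \<and> P s *v (c + G *v u') = Pt s *v (c + \<alpha> *\<^sub>R (G *v u))"
    if "s \<in> {a..b}" "u \<in> unit_ball Np" for s u
    using perturbed_point_in_image[OF Np Nn surj inf_le sup_c sup_G assms(9-11)] that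
    by (simp add: unit_ball_def)
  fix u assume u: "u \<in> unit_ball Np"
  show "integral {a..b} Pt *v (c + \<alpha> *\<^sub>R (G *v u)) \<in> set_integral_mat {a..b} P {c + G *v u | u. u \<in> unit_ball Np}"
  proof (rule integral_apply_in_set_integral_mat[OF assms(5,6) compact_affine_image_unit_ball[OF Np]
        convex_affine_image_unit_ball[OF Np]])
    fix s assume "s \<in> {a..b}"
    then obtain u' where "Np u' \<le> 1" "P s *v (c + G *v u') = Pt s *v (c + \<alpha> *\<^sub>R (G *v u))"
      using pointwise u by blast
    then show "\<exists>w\<in>{c + G *v u | u. u \<in> unit_ball Np}. P s *v w = Pt s *v (c + \<alpha> *\<^sub>R (G *v u))"
      unfolding unit_ball_def by blast
  qed
qed

end
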